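(* Let $p \geq 1$, let $\boldsymbol \Omega$ be a $p\times p$ positive definite matrix and let $\boldsymbol \Psi$ be a $p\times p$ non-diagonal positive definite matrix with all diagonal entries equal to $1$. Let $\boldsymbol \beta$ have the structured product normal (SPN) prior with parameters $\boldsymbol \Omega, \boldsymbol \Psi$, with marginal density $$p(\boldsymbol b \mid \boldsymbol \Psi, \boldsymbol \Omega) = \int_{\mathbb{R}^p} \Big(\prod_{i=1}^p \frac{1}{|s_i|}\Big)\, \phi_{\boldsymbol \Omega}(\boldsymbol b / \boldsymbol s)\, \phi_{\boldsymbol \Psi}(\boldsymbol s)\, d\boldsymbol s \in [0,+\infty],$$ where $\phi_{\boldsymbol A}$ denotes the $\text{normal}(\boldsymbol 0, \boldsymbol A)$ density and $\boldsymbol b/\boldsymbol s$ is elementwise division. If $\boldsymbol b \in \mathbb{R}^p$ satisfies $b_j = 0$ for some $j \in \{1,\dots,p\}$, then $p(\boldsymbol b \mid \boldsymbol \Psi, \boldsymbol \Omega) = +\infty$.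
   Context: The SPN prior is the distribution of $\boldsymbol \beta = \boldsymbol s \circ \boldsymbol z$ (elementwise product), where $\boldsymbol z \sim \text{normal}(\boldsymbol 0, \boldsymbol \Omega)$ and $\boldsymbol s \sim \text{normal}(\boldsymbol 0, \boldsymbol \Psi)$ are independent; the displayed integral is the resulting marginal (joint) prior density of $\boldsymbol \beta$ at $\boldsymbol b$, allowed to take the value $+\infty$. *)

theory Defs
  imports "HOL-Analysis.Analysis"
begin

definition pos_def_matrix :: "real^'n^'n \<Rightarrow> bool" where
  "pos_def_matrix A \<longleftrightarrow> transpose A = A \<and> (\<forall>x. x \<noteq> 0 \<longrightarrow> x \<bullet> (A *v x) > 0)"

definition diagonal_matrix :: "real^'n^'n \<Rightarrow> bool" where
  "diagonal_matrix A \<longleftrightarrow> (\<forall>i j. i \<noteq> j \<longrightarrow> A $ i $ j = 0)"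

definition normal_density :: "real^'n^'n \<Rightarrow> real^'n \<Rightarrow> real" where
  "normal_density A x =
     (2 * pi) powr (- real CARD('n) / 2) * det A powr (-1/2)
       * exp (- (x \<bullet> (matrix_inv A *v x)) / 2)"

text \<open>The integrand is only specified off the null set where some s_i = 0
  (there, with HOL's convention 1/0 = 0, it is taken to be 0).\<close>
definition spn_density :: "real^'n^'n \<Rightarrow> real^'n^'n \<Rightarrow> real^'n \<Rightarrow> ennreal" where
  "spn_density Psi Omega b =
     (\<integral>\<^sup>+ s. ennreal ((\<Prod>i\<in>UNIV. 1 / \<bar>s $ i\<bar>)
                 * normal_density Omega (\<chi> i. b $ i / s $ i)
                 * normal_density Psi s) \<partial>lborel)"

end

theory Submission
  imports Defs
begin

(* If b_j = 0, the coordinate s_j enters the Omega-factor only through b_j / s_j = 0, so as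
   s_j tends to 0 with the other coordinates kept in [1, 2] both normal densities stay bounded
   below. The integrand is then at least c / s_j there, which is not integrable at 0: the
   dyadic layer where s_j ~ 2^-k has volume ~ 2^-k and the integrand is ~ c 2^k on it, so each
   of the infinitely many layers contributes about c. *)

lemma pos_def_matrix_det_nonzero:
  fixes A :: "real^'n^'n"
  assumes "pos_def_matrix A"
  shows "det A \<noteq> 0"
proof -
  have "inj ((*v) A)"
  proof (rule injI)
    fix x y
    assume "A *v x = A *v y"
    then have "(x - y) \<bullet> (A *v (x - y)) = 0"
      by (simp add: matrix_vector_mult_diff_distrib)
    with assms show "x = y"
      unfolding pos_def_matrix_def by (metis less_irrefl right_minus_eq)
  qed
  then show ?thesis
    using det_nz_iff_inj[of "(*v) A"] by (simp add: matrix_of_matrix_vector_mul)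
qed

lemma normal_density_nonneg: "0 \<le> normal_density A x"
  unfolding normal_density_def by simp

lemma normal_density_bounded_below_on_cball:
  fixes A :: "real^'n^'n"
  assumes "det A \<noteq> 0"
  obtains c where "c > 0" and "\<And>x. norm x \<le> R \<Longrightarrow> c \<le> normal_density A x"
proof -
  obtain K where K: "K > 0" "\<And>x. norm (matrix_inv A *v x) \<le> norm x * K"
    using bounded_linear.pos_bounded[OF matrix_vector_mul_bounded_linear] by blast
  define c where
    "c = (2 * pi) powr (- real CARD('n) / 2) * det A powr (-1/2) * exp (- (R * R * K) / 2)"
  have "c \<le> normal_density A x" if "norm x \<le> R" for x
  proof -
    have "x \<bullet> (matrix_inv A *v x) \<le> norm x * norm (matrix_inv A *v x)"
      by (metis Cauchy_Schwarz_ineq2 abs_le_iff)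
    also have "\<dots> \<le> norm x * (norm x * K)"
      by (simp add: K(2) mult_left_mono)
    also have "\<dots> \<le> R * (R * K)"
      using that K(1) order_trans[OF norm_ge_zero that] by (intro mult_mono) auto
    finally show ?thesis
      unfolding c_def normal_density_def by (intro mult_left_mono) auto
  qed
  moreover have "c > 0"
    unfolding c_def using assms by simp
  ultimately show ?thesis
    using that by blast
qed

lemma ennreal_eq_top_if_ge_multiples:
  fixes x :: ennreal
  assumes "0 < a" and "\<And>N. of_nat N * ennreal a \<le> x"
  shows "x = top"
proof -
  have "(SUP N. of_nat N) * ennreal a \<le> x"
    using assms(2) by (simp add: SUP_mult_right_ennreal SUP_least)
  then show ?thesis
    using assms(1) by (simp add: ennreal_SUP_of_nat_eq_top ennreal_top_mult top_unique)
qed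

lemma dyadic_indicator_sum_le_inverse:
  fixes t :: real
  assumes "t > 0"
  shows "(\<Sum>k<N. 2 ^ k * indicator {3 / 2 ^ (k + 2) .. 1 / 2 ^ k} t) \<le> 1 / t"
proof (induction N)
  case 0
  then show ?case
    using assms by simp
next
  case (Suc N)
  show ?case
  proof (cases "t \<in> {3 / 2 ^ (N + 2) .. 1 / 2 ^ N}")
    case True
    have "(\<Sum>k<N. 2 ^ k * indicator {3 / 2 ^ (k + 2) .. 1 / 2 ^ k} t) = (0::real)"
    proof (intro sum.neutral ballI)
      fix k
      assume "k \<in> {..<N}"
      then have "(2::real) * 2 ^ k \<le> 2 ^ N"
        using power_increasing[of "k + 1" N "2::real"] by simp
      then have "(4::real) * 2 ^ k < 3 * 2 ^ N"
        using zero_less_power[of "2::real" k] by linarith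
      then have "1 / 2 ^ N < (3::real) / 2 ^ (k + 2)"
        by (simp add: field_simps)
      with True show "2 ^ k * indicator {3 / 2 ^ (k + 2) .. 1 / 2 ^ k} t = (0::real)"
        by auto
    qed
    moreover have "(2::real) ^ N \<le> 1 / t"
      using True assms by (simp add: field_simps)
    ultimately show ?thesis
      using True by simp
  next
    case False
    then show ?thesis
      using Suc.IH by simp
  qed
qed

(* The j-th sides [3 / 2^(k+2), 1 / 2^k] of different slabs are disjoint, as
   3 / 2^(k+2) > 1 / 2^(k+1), so every point lies in at most one slab. *)
definition dyadic_slab :: "'n \<Rightarrow> nat \<Rightarrow> (real^'n) set" where
  "dyadic_slab j k =
     cbox (\<chi> i. if i = j then 3 / 2 ^ (k + 2) else 1) (\<chi> i. if i = j then 1 / 2 ^ k else 2)"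

lemma mem_dyadic_slab:
  "s \<in> dyadic_slab j k \<longleftrightarrow>
     (\<forall>i. i \<noteq> j \<longrightarrow> s $ i \<in> {1..2}) \<and> s $ j \<in> {3 / 2 ^ (k + 2) .. 1 / 2 ^ k}"
  unfolding dyadic_slab_def mem_box_cart by (auto split: if_splits)

lemma emeasure_dyadic_slab: "emeasure lborel (dyadic_slab j k) = ennreal (1 / 2 ^ (k + 2))"
proof -
  have "(3::real) / 2 ^ (k + 2) \<le> 1 / 2 ^ k"
    by (simp add: field_simps)
  then have "(\<chi> i. if i = j then 3 / 2 ^ (k + 2) else 1) \<in> dyadic_slab j k"
    unfolding mem_dyadic_slab by simp
  then have "dyadic_slab j k \<noteq> {}"
    by blast
  have "emeasure lborel (dyadic_slab j k) \<noteq> top"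
    unfolding dyadic_slab_def using emeasure_lborel_cbox_finite by (simp add: less_top)
  then have "emeasure lborel (dyadic_slab j k) = ennreal (measure lborel (dyadic_slab j k))"
    by (rule emeasure_eq_ennreal_measure)
  also have "measure lborel (dyadic_slab j k) = 1 / 2 ^ k - 3 / 2 ^ (k + 2)"
    using \<open>dyadic_slab j k \<noteq> {}\<close> unfolding dyadic_slab_def
    by (simp add: content_cbox_cart if_distrib cong: if_cong)
  also have "\<dots> = 1 / 2 ^ (k + 2)"
    by (simp add: field_simps)
  finally show ?thesis .
qed

lemma sum_indicator_dyadic_slab_le:
  fixes f :: "real^'n \<Rightarrow> real"
  assumes "c > 0"
    and f_ge: "\<And>s. \<forall>i. i \<noteq> j \<longrightarrow> s $ i \<in> {1..2} \<Longrightarrow> 0 < s $ j \<Longrightarrow> s $ j \<le> 1 \<Longrightarrow>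
                 c / s $ j \<le> f s"
  shows "(\<Sum>k<N. ennreal (c * 2 ^ k) * indicator (dyadic_slab j k) s) \<le> ennreal (f s)"
proof (cases "(\<forall>i. i \<noteq> j \<longrightarrow> s $ i \<in> {1..2}) \<and> 0 < s $ j \<and> s $ j \<le> 1")
  case True
  have "(\<Sum>k<N. ennreal (c * 2 ^ k) * indicator (dyadic_slab j k) s)
      = (\<Sum>k<N. ennreal (c * (2 ^ k * indicator {3 / 2 ^ (k + 2) .. 1 / 2 ^ k} (s $ j))))"
    using True by (intro sum.cong) (auto simp: mem_dyadic_slab split: split_indicator)
  also have "\<dots> = ennreal (c * (\<Sum>k<N. 2 ^ k * indicator {3 / 2 ^ (k + 2) .. 1 / 2 ^ k} (s $ j)))"
    unfolding sum_distrib_left using assms(1) by (intro sum_ennreal) auto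
  also have "\<dots> \<le> ennreal (c * (1 / s $ j))"
    using True assms(1) by (intro ennreal_leI mult_left_mono dyadic_indicator_sum_le_inverse) auto
  also have "\<dots> \<le> ennreal (f s)"
    using True f_ge by (intro ennreal_leI) simp
  finally show ?thesis .
next
  case False
  have "s \<notin> dyadic_slab j k" for k
  proof
    assume "s \<in> dyadic_slab j k"
    then have others: "\<forall>i. i \<noteq> j \<longrightarrow> s $ i \<in> {1..2}"
      and "3 / 2 ^ (k + 2) \<le> s $ j" "s $ j \<le> 1 / 2 ^ k"
      unfolding mem_dyadic_slab by auto
    moreover have "(0::real) < 3 / 2 ^ (k + 2)" and "(1::real) / 2 ^ k \<le> 1"
      by simp_all
    ultimately have "0 < s $ j" "s $ j \<le> 1"
      by linarith+
    with others False show False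
      by blast
  qed
  then show ?thesis
    by simp
qed

lemma nn_integral_eq_top_if_ge_inverse_coordinate:
  fixes f :: "real^'n \<Rightarrow> real"
  assumes "c > 0"
    and "\<And>s. \<forall>i. i \<noteq> j \<longrightarrow> s $ i \<in> {1..2} \<Longrightarrow> 0 < s $ j \<Longrightarrow> s $ j \<le> 1 \<Longrightarrow>
           c / s $ j \<le> f s"
  shows "(\<integral>\<^sup>+ s. ennreal (f s) \<partial>lborel) = top"
proof (rule ennreal_eq_top_if_ge_multiples)
  show "0 < c / 4"
    using assms(1) by simp
  fix N
  have "of_nat N * ennreal (c / 4) = (\<Sum>k<N. ennreal (c * 2 ^ k) * emeasure lborel (dyadic_slab j k))"
  proof -
    have "ennreal (c / 4) = ennreal (c * 2 ^ k) * ennreal (1 / 2 ^ (k + 2))" for k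
      using assms(1) by (simp add: ennreal_mult[symmetric] field_simps)
    then show ?thesis
      by (simp add: emeasure_dyadic_slab)
  qed
  also have "\<dots> = (\<integral>\<^sup>+ s. (\<Sum>k<N. ennreal (c * 2 ^ k) * indicator (dyadic_slab j k) s) \<partial>lborel)"
    by (subst nn_integral_sum) (auto simp: nn_integral_cmult_indicator dyadic_slab_def)
  also have "\<dots> \<le> (\<integral>\<^sup>+ s. ennreal (f s) \<partial>lborel)"
    using assms by (intro nn_integral_mono sum_indicator_dyadic_slab_le)
  finally show "of_nat N * ennreal (c / 4) \<le> (\<integral>\<^sup>+ s. ennreal (f s) \<partial>lborel)" .
qed

definition spn_integrand :: "real^'n^'n \<Rightarrow> real^'n^'n \<Rightarrow> real^'n \<Rightarrow> real^'n \<Rightarrow> real" where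
  "spn_integrand Psi Omega b s =
     (\<Prod>i\<in>UNIV. 1 / \<bar>s $ i\<bar>) * normal_density Omega (\<chi> i. b $ i / s $ i) * normal_density Psi s"

lemma spn_density_eq_nn_integral:
  "spn_density Psi Omega b = (\<integral>\<^sup>+ s. ennreal (spn_integrand Psi Omega b s) \<partial>lborel)"
  unfolding spn_density_def spn_integrand_def ..

lemma spn_integrand_ge_inverse_coordinate:
  fixes Omega Psi :: "real^'n^'n" and b :: "real^'n"
  assumes "det Omega \<noteq> 0" and "det Psi \<noteq> 0" and "b $ j = 0"
  obtains c where "c > 0"
    and "\<And>s. \<forall>i. i \<noteq> j \<longrightarrow> s $ i \<in> {1..2} \<Longrightarrow> 0 < s $ j \<Longrightarrow> s $ j \<le> 1 \<Longrightarrow>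
           c / s $ j \<le> spn_integrand Psi Omega b s"
proof -
  obtain c1 where c1: "c1 > 0" "\<And>x. norm x \<le> norm b \<Longrightarrow> c1 \<le> normal_density Omega x"
    using normal_density_bounded_below_on_cball[OF assms(1)] by blast
  obtain c2 where c2: "c2 > 0"
    "\<And>x. norm x \<le> norm ((\<chi> i. 2) :: real^'n) \<Longrightarrow> c2 \<le> normal_density Psi x"
    using normal_density_bounded_below_on_cball[OF assms(2)] by blast
  define c where "c = (1/2) ^ CARD('n) * c1 * c2"
  have "c / s $ j \<le> spn_integrand Psi Omega b s"
    if s: "\<forall>i. i \<noteq> j \<longrightarrow> s $ i \<in> {1..2}" "0 < s $ j" "s $ j \<le> 1" for s
  proof -
    have "norm (\<chi> i. b $ i / s $ i) \<le> norm b"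
    proof (rule norm_le_componentwise_cart)
      fix i
      have "\<bar>b $ i\<bar> / \<bar>s $ i\<bar> \<le> \<bar>b $ i\<bar> / 1" if "i \<noteq> j"
        using s(1) that by (intro divide_left_mono) auto
      then show "norm ((\<chi> i. b $ i / s $ i) $ i) \<le> norm (b $ i)"
        using assms(3) by (cases "i = j") (auto simp: abs_divide)
    qed
    then have Omega_factor: "c1 \<le> normal_density Omega (\<chi> i. b $ i / s $ i)"
      using c1 by blast
    have "norm s \<le> norm ((\<chi> i. 2) :: real^'n)"
    proof (rule norm_le_componentwise_cart)
      fix i
      show "norm (s $ i) \<le> norm (((\<chi> i. 2) :: real^'n) $ i)"
        using s by (cases "i = j") auto
    qed
    then have Psi_factor: "c2 \<le> normal_density Psi s"
      using c2 by blast
    have "(1/2) ^ CARD('n) \<le> (\<Prod>i\<in>UNIV - {j}. (1/2::real))"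
      unfolding prod_constant by (intro power_decreasing) (auto simp: card_Diff_subset)
    also have "\<dots> \<le> (\<Prod>i\<in>UNIV - {j}. 1 / \<bar>s $ i\<bar>)"
      using s(1) by (intro prod_mono) (auto simp: field_simps)
    finally have "(1/2) ^ CARD('n) / s $ j \<le> (\<Prod>i\<in>UNIV. 1 / \<bar>s $ i\<bar>)"
      using s(2) by (simp add: prod.remove[of UNIV j] divide_right_mono)
    then have "(1/2) ^ CARD('n) / s $ j * c1 * c2 \<le> spn_integrand Psi Omega b s"
      unfolding spn_integrand_def using Omega_factor Psi_factor c1 c2
      by (intro mult_mono) (auto intro!: mult_nonneg_nonneg prod_nonneg normal_density_nonneg)
    then show ?thesis
      unfolding c_def by simp
  qed
  moreover have "c > 0"
    unfolding c_def using c1 c2 by simp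
  ultimately show ?thesis
    using that by blast
qed

theorem proposition2p1:
  fixes Omega Psi :: "real^'n^'n" and b :: "real^'n"
  assumes "pos_def_matrix Omega"
    and "pos_def_matrix Psi"
    and "\<not> diagonal_matrix Psi"
    and "\<forall>i. Psi $ i $ i = 1"
    and "\<exists>j. b $ j = 0"
  shows "spn_density Psi Omega b = \<infinity>"
proof -
  obtain j where "b $ j = 0"
    using assms(5) by blast
  obtain c where "c > 0" and "\<And>s. \<forall>i. i \<noteq> j \<longrightarrow> s $ i \<in> {1..2} \<Longrightarrow> 0 < s $ j \<Longrightarrow>
                     s $ j \<le> 1 \<Longrightarrow> c / s $ j \<le> spn_integrand Psi Omega b s"
    using spn_integrand_ge_inverse_coordinate[OF pos_def_matrix_det_nonzero[OF assms(1)]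
        pos_def_matrix_det_nonzero[OF assms(2)] \<open>b $ j = 0\<close>] by blast
  then have "(\<integral>\<^sup>+ s. ennreal (spn_integrand Psi Omega b s) \<partial>lborel) = top"
    by (rule nn_integral_eq_top_if_ge_inverse_coordinate)
  then show ?thesis
    by (simp add: spn_density_eq_nn_integral)
qed

end
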